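(* Let $Y_1,Y_2$ be real random variables with absolutely continuous distributions, c.d.f.'s $F_1,F_2$ and (unique) copula $C$ of $(Y_1,Y_2)$, and let $D$ be the set of all probability measures on $\mathbb R$. Put $\Delta(u)=F_1(u)+F_2(u)-2C(F_1(u),F_2(u))$, $u\in\mathbb R$. Then there exists $u^*\in\arg\max_{u\in\mathbb R}\Delta(u)$, and $$\max_{m\in D}E_m(Y_1,Y_2)=\Delta(u^* )=E_{\delta_{u^*}}(Y_1,Y_2),$$ i.e. the maximum over $D$ is attained at the Dirac measure $\delta_{u^*}$ (whose c.d.f. is $x\mapsto\mathbb 1\{u^*\le x\}$). If additionally $Y_1\stackrel{d}{=}Y_2$, then $$\max_{m\in D}E_m(Y_1,Y_2)=2\max_{x\in[0,1]}\big(x-C(x,x)\big),$$ and if $x^*\in(0,1)$ is a maximizer of $x\mapsto x-C(x,x)$ on $[0,1]$, the maximum is attained at $m=\delta_{u^*}$ with $u^*=F_1^{-1}(x^* )$.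
   Context: For a finite nonnegative measure $m$ on $\mathbb R$ and real random variables $Y_1,Y_2$, the excursion metric is $$E_m(Y_1,Y_2):=\int_{\mathbb R}\big(\mathbb P(Y_1>u)+\mathbb P(Y_2>u)-2\,\mathbb P(Y_1>u,Y_2>u)\big)\,m(du).$$ *)

theory Defs
  imports "HOL-Probability.Probability"
begin

definition rv_cdf :: "'a measure \<Rightarrow> ('a \<Rightarrow> real) \<Rightarrow> real \<Rightarrow> real" where
  "rv_cdf M Y u = measure M {\<omega> \<in> space M. Y \<omega> \<le> u}"

definition copula :: "(real \<Rightarrow> real \<Rightarrow> real) \<Rightarrow> bool" where
  "copula C \<longleftrightarrow>
     (\<forall>u\<in>{0..1}. C u 0 = 0 \<and> C 0 u = 0 \<and> C u 1 = u \<and> C 1 u = u) \<and>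
     (\<forall>u1 u2 v1 v2. 0 \<le> u1 \<and> u1 \<le> u2 \<and> u2 \<le> 1 \<and> 0 \<le> v1 \<and> v1 \<le> v2 \<and> v2 \<le> 1 \<longrightarrow>
        C u2 v2 - C u2 v1 - C u1 v2 + C u1 v1 \<ge> 0)"

definition copula_of :: "'a measure \<Rightarrow> ('a \<Rightarrow> real) \<Rightarrow> ('a \<Rightarrow> real) \<Rightarrow> (real \<Rightarrow> real \<Rightarrow> real) \<Rightarrow> bool" where
  "copula_of M Y1 Y2 C \<longleftrightarrow> copula C \<and>
     (\<forall>a b. measure M {\<omega> \<in> space M. Y1 \<omega> \<le> a \<and> Y2 \<omega> \<le> b}
             = C (rv_cdf M Y1 a) (rv_cdf M Y2 b))"

definition excursion_metric :: "'a measure \<Rightarrow> real measure \<Rightarrow> ('a \<Rightarrow> real) \<Rightarrow> ('a \<Rightarrow> real) \<Rightarrow> real" where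
  "excursion_metric M m Y1 Y2 =
     (\<integral>u. measure M {\<omega> \<in> space M. Y1 \<omega> > u} + measure M {\<omega> \<in> space M. Y2 \<omega> > u}
          - 2 * measure M {\<omega> \<in> space M. Y1 \<omega> > u \<and> Y2 \<omega> > u} \<partial>m)"

definition prob_measures_real :: "real measure set" where
  "prob_measures_real = {m. prob_space m \<and> sets m = sets borel}"

definition quantile :: "(real \<Rightarrow> real) \<Rightarrow> real \<Rightarrow> real" where
  "quantile F x = Inf {u. x \<le> F u}"

end

(*
  The integrand of E_m(Y1,Y2) at level u is the probability that u lies between Y1 and Y2,
  and by inclusion-exclusion this is the function Delta of the statement. Hence E_m is the
  m-average of Delta, which is continuous and vanishes at both infinities: the average is at
  most max Delta, with equality for the Dirac mass at a maximizer. For identical marginals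
  Delta(u) = 2 h(F(u)) with h(x) = x - C(x,x); since a continuous c.d.f. takes every value in
  (0,1) and h(0) = h(1) = 0, the maximum of Delta is twice the maximum of h on [0,1].
*)

theory Submission
  imports Defs
begin

definition excursion_delta :: "'a measure \<Rightarrow> ('a \<Rightarrow> real) \<Rightarrow> ('a \<Rightarrow> real) \<Rightarrow> real \<Rightarrow> real" where
  "excursion_delta M Y1 Y2 u = measure M {\<omega> \<in> space M. (Y1 \<omega> \<le> u) \<noteq> (Y2 \<omega> \<le> u)}"

lemma (in finite_measure) measure_Collect_neq:
  assumes "{x \<in> space M. P x} \<in> sets M" "{x \<in> space M. Q x} \<in> sets M"
  shows "measure M {x \<in> space M. P x \<noteq> Q x}
       = measure M {x \<in> space M. P x} + measure M {x \<in> space M. Q x}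
         - 2 * measure M {x \<in> space M. P x \<and> Q x}"
proof -
  let ?P = "{x \<in> space M. P x}" and ?Q = "{x \<in> space M. Q x}"
  have "{x \<in> space M. P x \<noteq> Q x} = (?P \<union> ?Q) - (?P \<inter> ?Q)"
    by auto
  then have "measure M {x \<in> space M. P x \<noteq> Q x} = measure M (?P \<union> ?Q) - measure M (?P \<inter> ?Q)"
    using assms by (simp only:) (intro finite_measure_Diff; auto)
  also have "measure M (?P \<union> ?Q) = measure M ?P + measure M ?Q - measure M (?P \<inter> ?Q)"
    using assms by (intro measure_Un3) (simp_all add: fmeasurable_eq_sets)
  also have "?P \<inter> ?Q = {x \<in> space M. P x \<and> Q x}"
    by auto
  finally show ?thesis
    by simp
qed

lemma continuous_vanishing_at_infinity_attains_max:
  fixes f :: "real \<Rightarrow> real"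
  assumes "\<And>u. isCont f u" and "(f \<longlongrightarrow> 0) at_bot" "(f \<longlongrightarrow> 0) at_top"
    and "\<And>u. 0 \<le> f u"
  shows "\<exists>us. \<forall>u. f u \<le> f us"
proof (cases "\<exists>a. f a > 0")
  case False
  then show ?thesis
    using assms(4) by (metis order.antisym not_less)
next
  case True
  then obtain a where a: "f a > 0"
    by blast
  obtain L where L: "\<And>u. u \<le> L \<Longrightarrow> f u < f a"
    using order_tendstoD(2)[OF assms(2) a] by (auto simp: eventually_at_bot_linorder)
  obtain R where R: "\<And>u. u \<ge> R \<Longrightarrow> f u < f a"
    using order_tendstoD(2)[OF assms(3) a] by (auto simp: eventually_at_top_linorder)
  let ?K = "{min L a..max R a}"
  obtain us where us: "us \<in> ?K" "\<And>u. u \<in> ?K \<Longrightarrow> f u \<le> f us"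
    using continuous_attains_sup[of ?K f] assms(1)
    by (metis atLeastAtMost_iff compact_Icc continuous_at_imp_continuous_on empty_iff
        max.cobounded2 min.cobounded2 order_trans)
  have "f u \<le> f us" for u
  proof (cases "u \<in> ?K")
    case False
    then have "f u < f a"
      using L R by force
    also have "f a \<le> f us"
      using us(2) by simp
    finally show ?thesis
      by simp
  qed (use us in simp)
  then show ?thesis
    by blast
qed

text \<open>The set of u with x \<le> F u is closed, so its infimum q satisfies x \<le> F q; by the
  intermediate value theorem F also takes the value x at some point \<le> q.\<close>
lemma cdf_quantile:
  fixes F :: "real \<Rightarrow> real"
  assumes "\<And>u. isCont F u" and "mono F" and "(F \<longlongrightarrow> 0) at_bot" "(F \<longlongrightarrow> 1) at_top"
    and "0 < x" "x < 1"
  shows "F (quantile F x) = x"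
proof -
  define S where "S = {u. x \<le> F u}"
  obtain a where a: "F a < x"
    using order_tendstoD(2)[OF assms(3,5)] by (auto simp: eventually_at_bot_linorder)
  obtain b where "x < F b"
    using order_tendstoD(1)[OF assms(4,6)] by (auto simp: eventually_at_top_linorder)
  then have "S \<noteq> {}"
    by (auto simp: S_def intro!: exI[of _ b])
  have a_lower: "a \<le> u" if "u \<in> S" for u
    using that a monoD[OF assms(2), of u a] by (force simp: S_def)
  then have "bdd_below S"
    by (rule bdd_belowI)
  moreover have "closed S"
    unfolding S_def using assms(1)
    by (intro closed_Collect_le) (auto simp: continuous_at_imp_continuous_on)
  ultimately have "Inf S \<in> S"
    using closed_contains_Inf \<open>S \<noteq> {}\<close> by blast
  then obtain c where c: "a \<le> c" "c \<le> Inf S" "F c = x"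
    using IVT[of F a x "Inf S"] a a_lower assms(1) by (auto simp: S_def)
  then have "Inf S \<le> c"
    using \<open>bdd_below S\<close> by (intro cInf_lower) (auto simp: S_def)
  then show ?thesis
    using c by (simp add: quantile_def S_def)
qed

lemma maximizer_comp_continuous_cdf:
  fixes F h :: "real \<Rightarrow> real"
  assumes "\<And>u. isCont F u" and "mono F" and "(F \<longlongrightarrow> 0) at_bot" "(F \<longlongrightarrow> 1) at_top"
    and "\<And>u. h (F u) \<le> h (F us)" and "h 0 \<le> h (F us)" "h 1 \<le> h (F us)"
    and "x \<in> {0..1}"
  shows "h x \<le> h (F us)"
proof -
  consider "x = 0" | "x = 1" | "0 < x \<and> x < 1"
    using assms(8) by fastforce
  then show ?thesis
  proof cases
    case 3
    then show ?thesis
      using assms(5)[of "quantile F x"] cdf_quantile[OF assms(1-4)] by simp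
  qed (use assms(6,7) in simp_all)
qed

context prob_space
begin

lemma excursion_metric_eq_integral_delta:
  assumes [measurable]: "Y1 \<in> borel_measurable M" "Y2 \<in> borel_measurable M"
  shows "excursion_metric M m Y1 Y2 = (\<integral>u. excursion_delta M Y1 Y2 u \<partial>m)"
proof -
  have "prob {\<omega> \<in> space M. Y1 \<omega> > u} + prob {\<omega> \<in> space M. Y2 \<omega> > u}
        - 2 * prob {\<omega> \<in> space M. Y1 \<omega> > u \<and> Y2 \<omega> > u} = excursion_delta M Y1 Y2 u" for u
  proof -
    have "{\<omega> \<in> space M. (Y1 \<omega> \<le> u) \<noteq> (Y2 \<omega> \<le> u)} = {\<omega> \<in> space M. (u < Y1 \<omega>) \<noteq> (u < Y2 \<omega>)}"
      by auto
    then show ?thesis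
      unfolding excursion_delta_def
      using measure_Collect_neq[of "\<lambda>\<omega>. u < Y1 \<omega>" "\<lambda>\<omega>. u < Y2 \<omega>"] by simp
  qed
  then show ?thesis
    unfolding excursion_metric_def by simp
qed

lemma excursion_delta_eq_copula:
  assumes [measurable]: "Y1 \<in> borel_measurable M" "Y2 \<in> borel_measurable M"
    and "copula_of M Y1 Y2 C"
  shows "excursion_delta M Y1 Y2 u
       = rv_cdf M Y1 u + rv_cdf M Y2 u - 2 * C (rv_cdf M Y1 u) (rv_cdf M Y2 u)"
  using assms(3) measure_Collect_neq[of "\<lambda>\<omega>. Y1 \<omega> \<le> u" "\<lambda>\<omega>. Y2 \<omega> \<le> u"]
  unfolding excursion_delta_def copula_of_def rv_cdf_def by simp

lemma excursion_delta_eq_rv_cdf_max: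
  assumes [measurable]: "Y1 \<in> borel_measurable M" "Y2 \<in> borel_measurable M"
  shows "excursion_delta M Y1 Y2
       = (\<lambda>u. rv_cdf M Y1 u + rv_cdf M Y2 u - 2 * rv_cdf M (\<lambda>\<omega>. max (Y1 \<omega>) (Y2 \<omega>)) u)"
proof
  fix u
  show "excursion_delta M Y1 Y2 u = rv_cdf M Y1 u + rv_cdf M Y2 u - 2 * rv_cdf M (\<lambda>\<omega>. max (Y1 \<omega>) (Y2 \<omega>)) u"
    using measure_Collect_neq[of "\<lambda>\<omega>. Y1 \<omega> \<le> u" "\<lambda>\<omega>. Y2 \<omega> \<le> u"]
    unfolding excursion_delta_def rv_cdf_def by simp
qed

lemma rv_cdf_eq_cdf_distr:
  assumes "X \<in> borel_measurable M"
  shows "rv_cdf M X = cdf (distr M borel X)"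
proof
  fix u
  show "rv_cdf M X u = cdf (distr M borel X) u"
    unfolding rv_cdf_def cdf_def using assms
    by (subst measure_distr) (auto intro!: arg_cong[where f = prob])
qed

lemma isCont_rv_cdf:
  assumes "X \<in> borel_measurable M" and "prob {\<omega> \<in> space M. X \<omega> = x} = 0"
  shows "isCont (rv_cdf M X) x"
proof -
  interpret D: real_distribution "distr M borel X"
    using assms(1) by simp
  have "measure (distr M borel X) {x} = prob {\<omega> \<in> space M. X \<omega> = x}"
    using assms(1) by (subst measure_distr) (auto intro!: arg_cong[where f = prob])
  then show ?thesis
    using assms by (simp add: rv_cdf_eq_cdf_distr D.isCont_cdf)
qed

lemma rv_cdf_at_bot:
  assumes "X \<in> borel_measurable M"
  shows "(rv_cdf M X \<longlongrightarrow> 0) at_bot"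
proof -
  interpret D: real_distribution "distr M borel X"
    using assms by simp
  show ?thesis
    using assms by (simp add: rv_cdf_eq_cdf_distr D.cdf_lim_at_bot)
qed

lemma rv_cdf_at_top:
  assumes "X \<in> borel_measurable M"
  shows "(rv_cdf M X \<longlongrightarrow> 1) at_top"
proof -
  interpret D: real_distribution "distr M borel X"
    using assms by simp
  show ?thesis
    using assms by (simp add: rv_cdf_eq_cdf_distr D.cdf_lim_at_top_prob)
qed

lemma mono_rv_cdf:
  assumes "X \<in> borel_measurable M"
  shows "mono (rv_cdf M X)"
proof -
  interpret D: real_distribution "distr M borel X"
    using assms by simp
  show ?thesis
    using assms by (auto simp: rv_cdf_eq_cdf_distr intro!: monoI D.cdf_nondecreasing)
qed

lemma prob_eq_0_if_absolutely_continuous: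
  assumes "X \<in> borel_measurable M" and "absolutely_continuous lborel (distr M lborel X)"
  shows "prob {\<omega> \<in> space M. X \<omega> = x} = 0"
proof -
  have "{x} \<in> null_sets lborel"
    by (rule finite_imp_null_set_lborel) simp
  then have "{x} \<in> null_sets (distr M lborel X)"
    using assms(2) unfolding absolutely_continuous_def by auto
  then have "emeasure M (X -` {x} \<inter> space M) = 0"
    using assms(1) by (auto simp: emeasure_distr)
  moreover have "X -` {x} \<inter> space M = {\<omega> \<in> space M. X \<omega> = x}"
    by auto
  ultimately show ?thesis
    by (simp add: measure_def)
qed

lemma borel_measurable_excursion_delta:
  assumes "Y1 \<in> borel_measurable M" "Y2 \<in> borel_measurable M"
  shows "excursion_delta M Y1 Y2 \<in> borel_measurable borel"
proof -
  have [measurable]: "rv_cdf M X \<in> borel_measurable borel" if "X \<in> borel_measurable M" for X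
    using that by (intro borel_measurable_mono mono_rv_cdf)
  show ?thesis
    unfolding excursion_delta_eq_rv_cdf_max[OF assms] using assms by measurable
qed

lemma isCont_excursion_delta:
  assumes [measurable]: "Y1 \<in> borel_measurable M" "Y2 \<in> borel_measurable M"
    and "\<And>x. prob {\<omega> \<in> space M. Y1 \<omega> = x} = 0" "\<And>x. prob {\<omega> \<in> space M. Y2 \<omega> = x} = 0"
  shows "isCont (excursion_delta M Y1 Y2) u"
proof -
  have "prob {\<omega> \<in> space M. max (Y1 \<omega>) (Y2 \<omega>) = u}
      \<le> prob ({\<omega> \<in> space M. Y1 \<omega> = u} \<union> {\<omega> \<in> space M. Y2 \<omega> = u})"
    by (rule finite_measure_mono) (auto simp: max_def)
  also have "\<dots> \<le> prob {\<omega> \<in> space M. Y1 \<omega> = u} + prob {\<omega> \<in> space M. Y2 \<omega> = u}"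
    by (rule measure_Un_le) auto
  finally have "prob {\<omega> \<in> space M. max (Y1 \<omega>) (Y2 \<omega>) = u} = 0"
    using assms(3,4) by (simp add: order.antisym)
  then show ?thesis
    using assms by (simp add: excursion_delta_eq_rv_cdf_max isCont_rv_cdf)
qed

lemma excursion_delta_at_bot:
  assumes [measurable]: "Y1 \<in> borel_measurable M" "Y2 \<in> borel_measurable M"
  shows "(excursion_delta M Y1 Y2 \<longlongrightarrow> 0) at_bot"
proof -
  have "((\<lambda>u. rv_cdf M Y1 u + rv_cdf M Y2 u - 2 * rv_cdf M (\<lambda>\<omega>. max (Y1 \<omega>) (Y2 \<omega>)) u)
      \<longlongrightarrow> 0 + 0 - 2 * 0) at_bot"
    by (intro tendsto_intros rv_cdf_at_bot) measurable
  then show ?thesis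
    by (simp add: excursion_delta_eq_rv_cdf_max)
qed

lemma excursion_delta_at_top:
  assumes [measurable]: "Y1 \<in> borel_measurable M" "Y2 \<in> borel_measurable M"
  shows "(excursion_delta M Y1 Y2 \<longlongrightarrow> 0) at_top"
proof -
  have "((\<lambda>u. rv_cdf M Y1 u + rv_cdf M Y2 u - 2 * rv_cdf M (\<lambda>\<omega>. max (Y1 \<omega>) (Y2 \<omega>)) u)
      \<longlongrightarrow> 1 + 1 - 2 * 1) at_top"
    by (intro tendsto_intros rv_cdf_at_top) measurable
  then show ?thesis
    by (simp add: excursion_delta_eq_rv_cdf_max)
qed

lemma excursion_metric_le_max:
  assumes "Y1 \<in> borel_measurable M" "Y2 \<in> borel_measurable M"
    and "m \<in> prob_measures_real" and "\<And>u. excursion_delta M Y1 Y2 u \<le> excursion_delta M Y1 Y2 us"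
  shows "excursion_metric M m Y1 Y2 \<le> excursion_delta M Y1 Y2 us"
proof -
  interpret m: prob_space m
    using assms(3) by (simp add: prob_measures_real_def)
  have "excursion_delta M Y1 Y2 \<in> borel_measurable m"
    using assms(3) borel_measurable_excursion_delta[OF assms(1,2)]
    by (simp add: prob_measures_real_def cong: measurable_cong_sets)
  moreover have "norm (excursion_delta M Y1 Y2 u) \<le> 1" for u
    by (simp add: excursion_delta_def)
  ultimately have "integrable m (excursion_delta M Y1 Y2)"
    by (intro m.integrable_const_bound[where B = 1]) auto
  then have "(\<integral>u. excursion_delta M Y1 Y2 u \<partial>m) \<le> (\<integral>u. excursion_delta M Y1 Y2 us \<partial>m)"
    using assms(4) by (intro integral_mono) auto
  then show ?thesis
    using assms(1,2) by (simp add: excursion_metric_eq_integral_delta m.prob_space)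
qed

lemma excursion_metric_return:
  assumes "Y1 \<in> borel_measurable M" "Y2 \<in> borel_measurable M"
  shows "excursion_metric M (return borel u) Y1 Y2 = excursion_delta M Y1 Y2 u"
  unfolding excursion_metric_eq_integral_delta[OF assms]
  by (intro integral_return borel_measurable_excursion_delta assms) simp

lemma excursion_delta_identical_marginals:
  assumes "Y1 \<in> borel_measurable M" "Y2 \<in> borel_measurable M"
    and "copula_of M Y1 Y2 C" and "distr M borel Y1 = distr M borel Y2"
  shows "excursion_delta M Y1 Y2 u = 2 * (rv_cdf M Y1 u - C (rv_cdf M Y1 u) (rv_cdf M Y1 u))"
proof -
  have "rv_cdf M Y2 = rv_cdf M Y1"
    using assms(1,2,4) by (simp add: rv_cdf_eq_cdf_distr)
  then show ?thesis
    using excursion_delta_eq_copula[OF assms(1-3)] by simp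
qed

lemma excursion_metric_max_identical_marginals:
  assumes Y: "Y1 \<in> borel_measurable M" "Y2 \<in> borel_measurable M"
    and atomless: "\<And>x. prob {\<omega> \<in> space M. Y1 \<omega> = x} = 0"
    and "copula_of M Y1 Y2 C" and "distr M borel Y1 = distr M borel Y2"
    and us: "\<And>u. excursion_delta M Y1 Y2 u \<le> excursion_delta M Y1 Y2 us"
  defines "h \<equiv> \<lambda>x. x - C x x"
  shows "(\<exists>x0\<in>{0..1}. \<forall>x\<in>{0..1}. h x \<le> h x0)
    \<and> (\<forall>x0\<in>{0..1}. (\<forall>x\<in>{0..1}. h x \<le> h x0) \<longrightarrow>
          (\<forall>m\<in>prob_measures_real. excursion_metric M m Y1 Y2 \<le> 2 * h x0)
        \<and> (\<exists>m\<in>prob_measures_real. excursion_metric M m Y1 Y2 = 2 * h x0))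
    \<and> (\<forall>xs\<in>{0<..<1}. (\<forall>x\<in>{0..1}. h x \<le> h xs) \<longrightarrow>
          excursion_metric M (return borel (quantile (rv_cdf M Y1) xs)) Y1 Y2 = 2 * h xs)"
proof -
  let ?F = "rv_cdf M Y1"
  have \<Delta>_h: "excursion_delta M Y1 Y2 u = 2 * h (?F u)" for u
    using excursion_delta_identical_marginals[OF Y assms(4,5)] by (simp add: h_def)
  note F = isCont_rv_cdf[OF Y(1) atomless] mono_rv_cdf[OF Y(1)]
    rv_cdf_at_bot[OF Y(1)] rv_cdf_at_top[OF Y(1)]
  have "h 0 = 0" "h 1 = 0"
    using assms(4) by (simp_all add: copula_of_def copula_def h_def)
  moreover have "0 \<le> excursion_delta M Y1 Y2 us"
    by (simp add: excursion_delta_def)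
  then have "0 \<le> h (?F us)"
    by (simp add: \<Delta>_h)
  ultimately have F_us_max: "h x \<le> h (?F us)" if "x \<in> {0..1}" for x
    using maximizer_comp_continuous_cdf[OF F, of h us x] us that by (simp add: \<Delta>_h)
  have F_us: "?F us \<in> {0..1}"
    by (simp add: rv_cdf_def)
  have dirac: "excursion_metric M (return borel u) Y1 Y2 = 2 * h (?F u)" for u
    using excursion_metric_return[OF Y] by (simp add: \<Delta>_h)
  show ?thesis
  proof (intro conjI ballI impI)
    show "\<exists>x0\<in>{0..1}. \<forall>x\<in>{0..1}. h x \<le> h x0"
      using F_us F_us_max by blast
  next
    fix x0 m
    assume "x0 \<in> {0..1}" "\<forall>x\<in>{0..1}. h x \<le> h x0" "m \<in> prob_measures_real"
    then show "excursion_metric M m Y1 Y2 \<le> 2 * h x0"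
      using excursion_metric_le_max[OF Y _ us, of m] F_us by (fastforce simp: \<Delta>_h)
  next
    fix x0
    assume "x0 \<in> {0..1}" "\<forall>x\<in>{0..1}. h x \<le> h x0"
    then have "h x0 = h (?F us)"
      using F_us F_us_max by (simp add: order.antisym)
    moreover have "return borel us \<in> prob_measures_real"
      by (simp add: prob_measures_real_def prob_space_return)
    ultimately show "\<exists>m\<in>prob_measures_real. excursion_metric M m Y1 Y2 = 2 * h x0"
      using dirac[of us] by auto
  next
    fix xs :: real
    assume "xs \<in> {0<..<1}"
    then show "excursion_metric M (return borel (quantile ?F xs)) Y1 Y2 = 2 * h xs"
      using dirac cdf_quantile[OF F] by simp
  qed
qed

end

theorem mainTheorem5:
  fixes M :: "'a measure" and Y1 Y2 :: "'a \<Rightarrow> real" and C :: "real \<Rightarrow> real \<Rightarrow> real"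
  assumes "prob_space M"
    and "Y1 \<in> borel_measurable M" and "Y2 \<in> borel_measurable M"
    and "absolutely_continuous lborel (distr M lborel Y1)"
    and "absolutely_continuous lborel (distr M lborel Y2)"
    and "copula_of M Y1 Y2 C"
  defines "F1 \<equiv> rv_cdf M Y1" and "F2 \<equiv> rv_cdf M Y2"
  defines "\<Delta> \<equiv> (\<lambda>u. F1 u + F2 u - 2 * C (F1 u) (F2 u))"
  shows "(\<exists>us. \<forall>u. \<Delta> u \<le> \<Delta> us)
      \<and> (\<forall>us. (\<forall>u. \<Delta> u \<le> \<Delta> us) \<longrightarrow>
            (\<forall>m\<in>prob_measures_real. excursion_metric M m Y1 Y2 \<le> \<Delta> us)
          \<and> return borel us \<in> prob_measures_real
          \<and> excursion_metric M (return borel us) Y1 Y2 = \<Delta> us)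
      \<and> (distr M borel Y1 = distr M borel Y2 \<longrightarrow>
            (\<exists>x0\<in>{0..1}. \<forall>x\<in>{0..1}. x - C x x \<le> x0 - C x0 x0)
          \<and> (\<forall>x0\<in>{0..1}. (\<forall>x\<in>{0..1}. x - C x x \<le> x0 - C x0 x0) \<longrightarrow>
                (\<forall>m\<in>prob_measures_real. excursion_metric M m Y1 Y2 \<le> 2 * (x0 - C x0 x0))
              \<and> (\<exists>m\<in>prob_measures_real. excursion_metric M m Y1 Y2 = 2 * (x0 - C x0 x0)))
          \<and> (\<forall>xs\<in>{0<..<1}. (\<forall>x\<in>{0..1}. x - C x x \<le> xs - C xs xs) \<longrightarrow>
                excursion_metric M (return borel (quantile F1 xs)) Y1 Y2 = 2 * (xs - C xs xs)))"
proof -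
  interpret prob_space M by fact
  note Y = assms(2,3)
  have atomless: "prob {\<omega> \<in> space M. Y1 \<omega> = x} = 0" "prob {\<omega> \<in> space M. Y2 \<omega> = x} = 0" for x
    using assms(2-5) by (simp_all add: prob_eq_0_if_absolutely_continuous)
  have \<Delta>_eq: "\<Delta> = excursion_delta M Y1 Y2"
    using excursion_delta_eq_copula[OF Y assms(6)] unfolding \<Delta>_def F1_def F2_def by auto
  have "\<exists>us. \<forall>u. \<Delta> u \<le> \<Delta> us"
    unfolding \<Delta>_eq using Y atomless
    by (intro continuous_vanishing_at_infinity_attains_max isCont_excursion_delta
        excursion_delta_at_bot excursion_delta_at_top) (auto simp: excursion_delta_def)
  then obtain us where us: "\<And>u. \<Delta> u \<le> \<Delta> us"
    by blast
  have "(\<forall>m\<in>prob_measures_real. excursion_metric M m Y1 Y2 \<le> \<Delta> us')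
      \<and> return borel us' \<in> prob_measures_real
      \<and> excursion_metric M (return borel us') Y1 Y2 = \<Delta> us'" if "\<forall>u. \<Delta> u \<le> \<Delta> us'" for us'
    using that excursion_metric_le_max[OF Y] excursion_metric_return[OF Y]
    by (auto simp: \<Delta>_eq prob_measures_real_def prob_space_return)
  moreover note excursion_metric_max_identical_marginals[OF Y atomless(1) assms(6) _ us[unfolded \<Delta>_eq]]
  ultimately show ?thesis
    using us unfolding F1_def by blast
qed

end
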